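(* Let $\mathbb X$ and $\mathbb Y$ be bounded domains in $\mathbb C$ and let $\Phi$ be a positive continuous weight on $\mathbb Y$. Suppose $h\colon\mathbb X\to\mathbb Y$ and $H\colon\mathbb X\to\mathbb Y$ are orientation-preserving $C^\infty$-diffeomorphisms onto $\mathbb Y$ with finite $\Phi$-weighted Dirichlet energy, and set $f:=H^{-1}\circ h\colon\mathbb X\to\mathbb X$. Then \[ \mathscr E^\Phi_{\mathbb X}[H]-\mathscr E^\Phi_{\mathbb X}[h]=4\int_{\mathbb X}\left[\frac{|f_z-\gamma(z)f_{\bar z}|^2}{|f_z|^2-|f_{\bar z}|^2}-1\right]\Phi(h)|h_zh_{\bar z}|\,dz+4\int_{\mathbb X}\Phi(h)\frac{(|h_z|-|h_{\bar z}|)^2|f_{\bar z}|^2}{|f_z|^2-|f_{\bar z}|^2}\,dz, \] where $\gamma(z)=h_z\overline{h_{\bar z}}\,|h_z\overline{h_{\bar z}}|^{-1}$ if $h_zh_{\bar z}\neq0$ and $\gamma(z)=0$ otherwise; moreover, the integrals on the right-hand side converge.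
   Context: For a map $g\colon\mathbb X\to\mathbb Y$ the $\Phi$-weighted Dirichlet energy is $\mathscr E^\Phi_{\mathbb X}[g]=\int_{\mathbb X}\Phi(g(z))\|Dg(z)\|^2\,dz$, where $\|Dg\|$ is the Hilbert–Schmidt norm (so $\|Dg\|^2=2(|g_z|^2+|g_{\bar z}|^2)$). Here $g_z,g_{\bar z}$ denote the complex (Wirtinger) derivatives. *)

theory Defs
  imports "HOL-Analysis.Analysis"
begin

definition Dg :: "(complex \<Rightarrow> complex) \<Rightarrow> complex \<Rightarrow> complex \<Rightarrow> complex" where
  "Dg g z v = frechet_derivative g (at z) v"

definition wz :: "(complex \<Rightarrow> complex) \<Rightarrow> complex \<Rightarrow> complex" where
  "wz g z = (Dg g z 1 - \<i> * Dg g z \<i>) / 2"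

definition wzbar :: "(complex \<Rightarrow> complex) \<Rightarrow> complex \<Rightarrow> complex" where
  "wzbar g z = (Dg g z 1 + \<i> * Dg g z \<i>) / 2"

definition hs_sq :: "(complex \<Rightarrow> complex) \<Rightarrow> complex \<Rightarrow> real" where
  "hs_sq g z = (cmod (Dg g z 1))\<^sup>2 + (cmod (Dg g z \<i>))\<^sup>2"

definition jac :: "(complex \<Rightarrow> complex) \<Rightarrow> complex \<Rightarrow> real" where
  "jac g z = Re (Dg g z 1) * Im (Dg g z \<i>) - Im (Dg g z 1) * Re (Dg g z \<i>)"

fun Ck_on :: "nat \<Rightarrow> complex set \<Rightarrow> (complex \<Rightarrow> complex) \<Rightarrow> bool" where
  "Ck_on 0 S g = continuous_on S g"
| "Ck_on (Suc k) S g = (g differentiable_on S \<and> (\<forall>v. Ck_on k S (\<lambda>z. Dg g z v)))"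

definition smooth_on :: "complex set \<Rightarrow> (complex \<Rightarrow> complex) \<Rightarrow> bool" where
  "smooth_on S g = (\<forall>k. Ck_on k S g)"

definition op_diffeo :: "complex set \<Rightarrow> complex set \<Rightarrow> (complex \<Rightarrow> complex) \<Rightarrow> bool" where
  "op_diffeo X Y g = (bij_betw g X Y \<and> smooth_on X g \<and> smooth_on Y (inv_into X g)
       \<and> (\<forall>z\<in>X. jac g z > 0))"

definition domain :: "complex set \<Rightarrow> bool" where
  "domain S = (open S \<and> connected S \<and> S \<noteq> {})"

definition energy :: "(complex \<Rightarrow> real) \<Rightarrow> complex set \<Rightarrow> (complex \<Rightarrow> complex) \<Rightarrow> real" where
  "energy \<Phi> X g = (LINT z:X|lborel. \<Phi> (g z) * hs_sq g z)"

definition finite_energy :: "(complex \<Rightarrow> real) \<Rightarrow> complex set \<Rightarrow> (complex \<Rightarrow> complex) \<Rightarrow> bool" where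
  "finite_energy \<Phi> X g = set_integrable lborel X (\<lambda>z. \<Phi> (g z) * hs_sq g z)"

definition gam :: "(complex \<Rightarrow> complex) \<Rightarrow> complex \<Rightarrow> complex" where
  "gam h z = (if wz h z * wzbar h z \<noteq> 0
      then wz h z * cnj (wzbar h z) / complex_of_real (cmod (wz h z * cnj (wzbar h z)))
      else 0)"

end

(*
  Write h = H o f with f = H^-1 o h, a diffeomorphism of X onto itself. The change of
  variables w = f z turns the energy of H into the integral over X of
  J_f * Phi(h) * |DH(f)|^2, so the energy difference is the integral of a pointwise
  difference of densities. The chain rule h_z = H_z(f) f_z + H_zbar(f) conj f_zbar,
  h_zbar = H_z(f) f_zbar + H_zbar(f) conj f_z can be solved for H_z(f), H_zbar(f) because
  J_f = |f_z|^2 - |f_zbar|^2 > 0, and an algebraic identity then turns the density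
  difference into four times the sum of the two integrands. The second integrand is
  nonnegative, and the first is bounded below by -Phi(h) |h_z h_zbar| >= -Phi(h) |Dh|^2 / 4,
  which is integrable; hence both are integrable.
*)

theory Submission
  imports Defs
begin

(* The change-of-variables theorem of HOL-Analysis is stated for real^'n. *)
definition vec_of_complex :: "complex \<Rightarrow> real^2" where
  "vec_of_complex z = vector [Re z, Im z]"

definition complex_of_vec :: "real^2 \<Rightarrow> complex" where
  "complex_of_vec y = Complex (y$1) (y$2)"

lemma vec_of_complex_nth [simp]: "vec_of_complex z $ 1 = Re z" "vec_of_complex z $ 2 = Im z"
  by (simp_all add: vec_of_complex_def)

lemma complex_of_vec_inverse [simp]: "complex_of_vec (vec_of_complex z) = z"
  by (simp add: complex_of_vec_def complex_eq_iff)

lemma vec_of_complex_inverse [simp]: "vec_of_complex (complex_of_vec y) = y"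
  by (simp add: complex_of_vec_def vec_eq_iff forall_2)

lemma complex_of_vec_axis [simp]: "complex_of_vec (axis 1 1) = 1" "complex_of_vec (axis 2 1) = \<i>"
  by (simp_all add: complex_of_vec_def axis_def complex_eq_iff)

lemma bounded_linear_vec_of_complex: "bounded_linear vec_of_complex"
  by (auto intro!: linearI simp: linear_conv_bounded_linear[symmetric] vec_eq_iff forall_2)

lemma bounded_linear_complex_of_vec: "bounded_linear complex_of_vec"
  by (auto intro!: linearI simp: linear_conv_bounded_linear[symmetric] complex_of_vec_def complex_eq_iff)

lemma vec_of_complex_measurable [measurable]: "vec_of_complex \<in> borel_measurable borel"
  and complex_of_vec_measurable [measurable]: "complex_of_vec \<in> borel_measurable borel"
  using bounded_linear_vec_of_complex bounded_linear_complex_of_vec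
  by (simp_all add: borel_measurable_continuous_onI linear_continuous_on)

lemma distr_vec_of_complex_lborel: "distr lborel borel vec_of_complex = lborel"
proof (rule lborel_eqI[symmetric])
  fix l u :: "real^2"
  assume le: "\<And>b. b \<in> Basis \<Longrightarrow> l \<bullet> b \<le> u \<bullet> b"
  have Basis_eq: "(Basis :: (real^2) set) = {axis 1 1, axis 2 1}"
    by (auto simp: Basis_vec_def UNIV_2)
  have axis_neq: "axis 1 (1::real) \<noteq> (axis 2 1 :: real^2)"
    by (simp add: axis_eq_axis)
  have "vec_of_complex -` box l u = box (complex_of_vec l) (complex_of_vec u)"
    by (auto simp: mem_box_cart in_box_complex_iff complex_of_vec_def forall_2)
  moreover have "l $ 1 \<le> u $ 1" "l $ 2 \<le> u $ 2"
    using le[of "axis 1 1"] le[of "axis 2 1"] by (auto simp: Basis_vec_def inner_axis)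
  ultimately show "emeasure (distr lborel borel vec_of_complex) (box l u) = (\<Prod>b\<in>Basis. (u - l) \<bullet> b)"
    by (simp add: emeasure_distr emeasure_lborel_box_eq Basis_eq axis_neq Basis_complex_def
        inner_axis complex_of_vec_def)
qed simp

lemma set_integrable_complex_iff_vec:
  fixes F :: "complex \<Rightarrow> real"
  assumes meas: "set_borel_measurable lborel S F"
  shows "set_integrable lborel S F
    \<longleftrightarrow> (\<lambda>y. F (complex_of_vec y)) absolutely_integrable_on (complex_of_vec -` S)"
    and "set_integrable lborel S F
    \<Longrightarrow> (LINT z:S|lborel. F z) = integral (complex_of_vec -` S) (\<lambda>y. F (complex_of_vec y))"
proof -
  define G where "G y = indicator S (complex_of_vec y) * F (complex_of_vec y)" for y
  have [measurable]: "G \<in> borel_measurable borel"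
    unfolding G_def using meas by (simp add: set_borel_measurable_def)
  have G_vec: "(\<lambda>z. G (vec_of_complex z)) = (\<lambda>z. indicator S z *\<^sub>R F z)"
    by (simp add: G_def)
  have G_preimage: "(\<lambda>y. indicator (complex_of_vec -` S) y *\<^sub>R F (complex_of_vec y)) = G"
    by (auto simp: G_def indicator_def)
  have G_lborel: "G \<in> lborel \<rightarrow>\<^sub>M borel"
    by simp
  have G_integrable: "integrable lborel G \<longleftrightarrow> integrable lborel (\<lambda>z. G (vec_of_complex z))"
    by (subst distr_vec_of_complex_lborel[symmetric]) (rule integrable_distr_eq; simp)
  have G_integral: "integral\<^sup>L lborel G = integral\<^sup>L lborel (\<lambda>z. G (vec_of_complex z))"
    by (subst distr_vec_of_complex_lborel[symmetric]) (rule integral_distr; simp)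
  have "set_integrable lborel S F \<longleftrightarrow> integrable lborel G"
    unfolding set_integrable_def G_integrable G_vec ..
  also have "\<dots> \<longleftrightarrow> (\<lambda>y. F (complex_of_vec y)) absolutely_integrable_on (complex_of_vec -` S)"
    unfolding set_integrable_def G_preimage integrable_completion[OF G_lborel] ..
  finally show iff: "set_integrable lborel S F
    \<longleftrightarrow> (\<lambda>y. F (complex_of_vec y)) absolutely_integrable_on (complex_of_vec -` S)" .
  assume int: "set_integrable lborel S F"
  have "(LINT z:S|lborel. F z) = integral\<^sup>L lborel G"
    unfolding set_lebesgue_integral_def G_integral G_vec ..
  also have "\<dots> = (LINT y:(complex_of_vec -` S)|lebesgue. F (complex_of_vec y))"
    unfolding set_lebesgue_integral_def G_preimage integral_completion[OF G_lborel] ..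
  also have "\<dots> = integral (complex_of_vec -` S) (\<lambda>y. F (complex_of_vec y))"
    using int iff by (simp add: set_lebesgue_integral_eq_integral(2))
  finally show "(LINT z:S|lborel. F z) = integral (complex_of_vec -` S) (\<lambda>y. F (complex_of_vec y))" .
qed

definition lin_dz :: "(complex \<Rightarrow> complex) \<Rightarrow> complex" where
  "lin_dz L = (L 1 - \<i> * L \<i>) / 2"

definition lin_dzbar :: "(complex \<Rightarrow> complex) \<Rightarrow> complex" where
  "lin_dzbar L = (L 1 + \<i> * L \<i>) / 2"

definition lin_hs_sq :: "(complex \<Rightarrow> complex) \<Rightarrow> real" where
  "lin_hs_sq L = (cmod (L 1))\<^sup>2 + (cmod (L \<i>))\<^sup>2"

definition lin_jac :: "(complex \<Rightarrow> complex) \<Rightarrow> real" where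
  "lin_jac L = Re (L 1) * Im (L \<i>) - Im (L 1) * Re (L \<i>)"

lemma wz_eq_lin_dz: "wz g z = lin_dz (Dg g z)"
  and wzbar_eq_lin_dzbar: "wzbar g z = lin_dzbar (Dg g z)"
  and hs_sq_eq_lin_hs_sq: "hs_sq g z = lin_hs_sq (Dg g z)"
  and jac_eq_lin_jac: "jac g z = lin_jac (Dg g z)"
  by (simp_all add: wz_def lin_dz_def wzbar_def lin_dzbar_def hs_sq_def lin_hs_sq_def
      jac_def lin_jac_def)

lemma linear_eq_lin_dz_lin_dzbar:
  assumes "linear L"
  shows "L v = lin_dz L * v + lin_dzbar L * cnj v"
proof -
  have "Re v *\<^sub>R 1 + Im v *\<^sub>R \<i> = v"
    by (simp add: complex_eq_iff)
  then have "L v = L (Re v *\<^sub>R 1 + Im v *\<^sub>R \<i>)"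
    by simp
  also have "\<dots> = Re v *\<^sub>R L 1 + Im v *\<^sub>R L \<i>"
    using assms by (simp add: linear_add linear_scale)
  finally show ?thesis
    by (simp add: lin_dz_def lin_dzbar_def complex_eq_iff field_simps scaleR_conv_of_real)
qed

lemma linear_apply_one: "linear L \<Longrightarrow> L 1 = lin_dz L + lin_dzbar L"
  and linear_apply_ii: "linear L \<Longrightarrow> L \<i> = \<i> * (lin_dz L - lin_dzbar L)"
  by (simp_all add: linear_eq_lin_dz_lin_dzbar[of L] algebra_simps)

lemma lin_hs_sq_eq: "linear L \<Longrightarrow> lin_hs_sq L = 2 * ((cmod (lin_dz L))\<^sup>2 + (cmod (lin_dzbar L))\<^sup>2)"
  unfolding lin_hs_sq_def linear_apply_one linear_apply_ii cmod_power2
  by (simp add: algebra_simps power2_eq_square)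

lemma lin_jac_eq: "linear L \<Longrightarrow> lin_jac L = (cmod (lin_dz L))\<^sup>2 - (cmod (lin_dzbar L))\<^sup>2"
  unfolding lin_jac_def linear_apply_one linear_apply_ii cmod_power2
  by (simp add: algebra_simps power2_eq_square)

lemma lin_dz_compose:
  assumes "linear L" "linear M"
  shows "lin_dz (\<lambda>v. L (M v)) = lin_dz L * lin_dz M + lin_dzbar L * cnj (lin_dzbar M)"
    and "lin_dzbar (\<lambda>v. L (M v)) = lin_dz L * lin_dzbar M + lin_dzbar L * cnj (lin_dz M)"
proof -
  have "L (M 1) = lin_dz L * (lin_dz M + lin_dzbar M) + lin_dzbar L * cnj (lin_dz M + lin_dzbar M)"
    and "L (M \<i>) = lin_dz L * (\<i> * (lin_dz M - lin_dzbar M))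
      + lin_dzbar L * cnj (\<i> * (lin_dz M - lin_dzbar M))"
    by (simp_all only: linear_eq_lin_dz_lin_dzbar[OF assms(1)] linear_apply_one[OF assms(2)]
        linear_apply_ii[OF assms(2)])
  then show "lin_dz (\<lambda>v. L (M v)) = lin_dz L * lin_dz M + lin_dzbar L * cnj (lin_dzbar M)"
    and "lin_dzbar (\<lambda>v. L (M v)) = lin_dz L * lin_dzbar M + lin_dzbar L * cnj (lin_dz M)"
    unfolding lin_dz_def[of "\<lambda>v. L (M v)"] lin_dzbar_def[of "\<lambda>v. L (M v)"]
    by (simp_all add: complex_eq_iff field_simps)
qed

lemma lin_jac_compose:
  assumes "linear L" "linear M"
  shows "lin_jac (\<lambda>v. L (M v)) = lin_jac L * lin_jac M"
proof -
  have lin: "linear (\<lambda>v. L (M v))"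
    using linear_compose[OF assms(2,1)] by (simp add: o_def)
  show ?thesis
    unfolding lin_jac_eq[OF assms(1)] lin_jac_eq[OF assms(2)] lin_jac_eq[OF lin] lin_dz_compose[OF assms]
      cmod_power2
    by (simp add: algebra_simps power2_eq_square)
qed

lemma det_matrix_vec_of_complex:
  "det (matrix (\<lambda>v. vec_of_complex (L (complex_of_vec v)))) = lin_jac L"
  by (simp add: det_2 matrix_def lin_jac_def)

lemma has_absolute_integral_change_of_variables_scalar:
  fixes F :: "real^'m::{finite,wellorder} \<Rightarrow> real" and g :: "real^'m::_ \<Rightarrow> real^'m::_"
  assumes "S \<in> sets lebesgue"
    and "\<And>x. x \<in> S \<Longrightarrow> (g has_derivative g' x) (at x within S)"
    and "inj_on g S"
  shows "(\<lambda>x. \<bar>det (matrix (g' x))\<bar> * F (g x)) absolutely_integrable_on S \<and>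
           integral S (\<lambda>x. \<bar>det (matrix (g' x))\<bar> * F (g x)) = b
     \<longleftrightarrow> F absolutely_integrable_on (g ` S) \<and> integral (g ` S) F = b"
  using has_absolute_integral_change_of_variables[OF assms, of "\<lambda>x. vec (F x) :: real^1" "vec b"]
  by (simp add: absolutely_integrable_on_1_iff integral_on_1_eq)

lemma set_integral_change_of_variables_complex:
  fixes F :: "complex \<Rightarrow> real" and g :: "complex \<Rightarrow> complex"
  assumes S: "S \<in> sets borel"
    and der: "\<And>x. x \<in> S \<Longrightarrow> (g has_derivative g' x) (at x within S)"
    and inj: "inj_on g S"
    and meas: "set_borel_measurable lborel S (\<lambda>z. \<bar>lin_jac (g' z)\<bar> * F (g z))"
    and int: "set_integrable lborel (g ` S) F"
  shows "set_integrable lborel S (\<lambda>z. \<bar>lin_jac (g' z)\<bar> * F (g z))"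
    and "(LINT z:S|lborel. \<bar>lin_jac (g' z)\<bar> * F (g z)) = (LINT z:g ` S|lborel. F z)"
proof -
  define S2 where "S2 = complex_of_vec -` S"
  define g2 where "g2 y = vec_of_complex (g (complex_of_vec y))" for y
  define g2' where "g2' y = (\<lambda>v. vec_of_complex (g' (complex_of_vec y) (complex_of_vec v)))" for y
  have S2: "S2 \<in> sets lebesgue"
    unfolding S2_def using S
    by (metis complex_of_vec_measurable measurable_sets_borel sets_completionI_sets sets_lborel)
  have image: "complex_of_vec -` (g ` S) = g2 ` S2"
  proof
    show "complex_of_vec -` (g ` S) \<subseteq> g2 ` S2"
    proof
      fix y assume "y \<in> complex_of_vec -` (g ` S)"
      then obtain x where "x \<in> S" "complex_of_vec y = g x"
        by auto
      then have "y = g2 (vec_of_complex x)" "vec_of_complex x \<in> S2"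
        by (metis vec_of_complex_inverse g2_def complex_of_vec_inverse, simp add: S2_def)
      then show "y \<in> g2 ` S2"
        by blast
    qed
  qed (auto simp: g2_def S2_def)
  have der2: "(g2 has_derivative g2' y) (at y within S2)" if "y \<in> S2" for y
  proof -
    have "(complex_of_vec has_derivative complex_of_vec) (at y within S2)"
      by (rule bounded_linear_imp_has_derivative[OF bounded_linear_complex_of_vec])
    moreover have "(g has_derivative g' (complex_of_vec y))
        (at (complex_of_vec y) within complex_of_vec ` S2)"
      using der[of "complex_of_vec y"] that by (auto simp: S2_def intro: has_derivative_subset)
    ultimately have "((\<lambda>x. g (complex_of_vec x)) has_derivative
        (\<lambda>v. g' (complex_of_vec y) (complex_of_vec v))) (at y within S2)"
      by (rule has_derivative_in_compose)
    moreover have "(vec_of_complex has_derivative vec_of_complex)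
        (at (g (complex_of_vec y)) within (\<lambda>x. g (complex_of_vec x)) ` S2)"
      by (rule bounded_linear_imp_has_derivative[OF bounded_linear_vec_of_complex])
    ultimately show ?thesis
      unfolding g2_def g2'_def by (rule has_derivative_in_compose)
  qed
  have inj2: "inj_on g2 S2"
    using inj unfolding inj_on_def g2_def S2_def by (metis vec_of_complex_inverse complex_of_vec_inverse vimageE)
  have meas_image: "set_borel_measurable lborel (g ` S) F"
    using int by (simp add: set_integrable_def set_borel_measurable_def)
  note change = has_absolute_integral_change_of_variables_scalar[OF S2 der2 inj2,
      of "\<lambda>y. F (complex_of_vec y)" "integral (g2 ` S2) (\<lambda>y. F (complex_of_vec y))"]
  have "(\<lambda>y. \<bar>lin_jac (g' (complex_of_vec y))\<bar> * F (g (complex_of_vec y))) absolutely_integrable_on S2"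
    and "integral S2 (\<lambda>y. \<bar>lin_jac (g' (complex_of_vec y))\<bar> * F (g (complex_of_vec y)))
      = integral (g2 ` S2) (\<lambda>y. F (complex_of_vec y))"
    using change set_integrable_complex_iff_vec(1)[OF meas_image] int
    by (simp_all add: image g2_def g2'_def det_matrix_vec_of_complex)
  then show "set_integrable lborel S (\<lambda>z. \<bar>lin_jac (g' z)\<bar> * F (g z))"
    and "(LINT z:S|lborel. \<bar>lin_jac (g' z)\<bar> * F (g z)) = (LINT z:g ` S|lborel. F z)"
    using set_integrable_complex_iff_vec[OF meas] set_integrable_complex_iff_vec(2)[OF meas_image int]
    by (simp_all add: S2_def image)
qed

lemma gam_eq_sgn: "gam h z = sgn (wz h z * cnj (wzbar h z))"
  by (simp add: gam_def sgn_div_norm scaleR_conv_of_real divide_inverse mult.commute)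

lemma norm_sq_inverse_composition:
  fixes a b c d p q :: complex
  assumes "a = p * c + q * cnj d" "b = p * d + q * cnj c"
  shows "((cmod c)\<^sup>2 - (cmod d)\<^sup>2)\<^sup>2 * ((cmod p)\<^sup>2 + (cmod q)\<^sup>2)
     = ((cmod a)\<^sup>2 + (cmod b)\<^sup>2) * ((cmod c)\<^sup>2 + (cmod d)\<^sup>2) - 4 * Re (a * cnj b * cnj c * d)"
  unfolding assms cmod_power2 by (simp add: algebra_simps power2_eq_square)

lemma norm_sq_diff_sgn_mult:
  fixes c d w :: complex
  shows "(cmod (c - sgn w * d))\<^sup>2 * cmod w
    = ((cmod c)\<^sup>2 + (cmod d)\<^sup>2) * cmod w - 2 * Re (w * cnj c * d)"
proof (cases "w = 0")
  case False
  have norm_sq: "(cmod (c - s * d))\<^sup>2 = (cmod c)\<^sup>2 + (cmod s)\<^sup>2 * (cmod d)\<^sup>2 - 2 * Re (s * cnj c * d)"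
    for s
    unfolding cmod_power2 by (simp add: algebra_simps power2_eq_square)
  have "Re (sgn w * cnj c * d) = Re (w * cnj c * d) / cmod w"
    by (simp add: sgn_eq Re_divide_of_real mult.commute mult.left_commute)
  then have "(cmod (c - sgn w * d))\<^sup>2 = (cmod c)\<^sup>2 + (cmod d)\<^sup>2 - 2 * (Re (w * cnj c * d) / cmod w)"
    using norm_sq[of "sgn w"] False by (simp add: norm_sgn)
  then show ?thesis
    using False by (simp add: field_simps)
qed simp

(* For h = H o f: a, b are h_z, h_zbar; c, d are f_z, f_zbar; p, q are H_z, H_zbar at f. *)
lemma dirichlet_density_identity:
  fixes a b c d p q :: complex
  assumes J: "0 < (cmod c)\<^sup>2 - (cmod d)\<^sup>2"
    and chain: "a = p * c + q * cnj d" "b = p * d + q * cnj c"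
  shows "((cmod c)\<^sup>2 - (cmod d)\<^sup>2) * (2 * ((cmod p)\<^sup>2 + (cmod q)\<^sup>2)) - 2 * ((cmod a)\<^sup>2 + (cmod b)\<^sup>2)
    = 4 * (((cmod (c - sgn (a * cnj b) * d))\<^sup>2 / ((cmod c)\<^sup>2 - (cmod d)\<^sup>2) - 1) * cmod (a * b))
      + 4 * ((cmod a - cmod b)\<^sup>2 * (cmod d)\<^sup>2 / ((cmod c)\<^sup>2 - (cmod d)\<^sup>2))"
    (is "?lhs = ?rhs")
proof -
  define J where "J = (cmod c)\<^sup>2 - (cmod d)\<^sup>2"
  define R where "R = Re (a * cnj b * cnj c * d)"
  have inverse: "J\<^sup>2 * ((cmod p)\<^sup>2 + (cmod q)\<^sup>2)
      = ((cmod a)\<^sup>2 + (cmod b)\<^sup>2) * ((cmod c)\<^sup>2 + (cmod d)\<^sup>2) - 4 * R"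
    unfolding J_def R_def by (rule norm_sq_inverse_composition[OF chain])
  have phase: "(cmod (c - sgn (a * cnj b) * d))\<^sup>2 * cmod (a * b)
      = ((cmod c)\<^sup>2 + (cmod d)\<^sup>2) * cmod (a * b) - 2 * R"
    using norm_sq_diff_sgn_mult[of c "a * cnj b" d] by (simp add: R_def norm_mult mult.assoc)
  have "J * ?lhs = 4 * (((cmod a)\<^sup>2 + (cmod b)\<^sup>2) * (cmod d)\<^sup>2 - 2 * R)"
    using inverse unfolding J_def by (simp add: algebra_simps power2_eq_square)
  also have "\<dots> = 4 * ((cmod (c - sgn (a * cnj b) * d))\<^sup>2 * cmod (a * b) - J * cmod (a * b)
      + (cmod a - cmod b)\<^sup>2 * (cmod d)\<^sup>2)"
    unfolding phase J_def by (simp add: algebra_simps power2_eq_square norm_mult)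
  also have "\<dots> = J * ?rhs"
    using J unfolding J_def[symmetric] by (simp add: field_simps)
  finally show ?thesis
    using J by (simp add: J_def[symmetric])
qed

lemma set_integrable_nonneg_summands:
  fixes u v k :: "'a \<Rightarrow> real"
  assumes sum: "set_integrable M A (\<lambda>x. u x + v x)" and k: "set_integrable M A k"
    and v_meas: "set_borel_measurable M A v"
    and v_nonneg: "\<And>x. x \<in> A \<Longrightarrow> 0 \<le> v x"
    and u_lower: "\<And>x. x \<in> A \<Longrightarrow> 0 \<le> u x + k x"
  shows "set_integrable M A u" and "set_integrable M A v"
proof -
  have "set_integrable M A (\<lambda>x. (u x + v x) + k x)"
    using sum k by (rule set_integral_add)
  moreover have "norm (v x) \<le> norm ((u x + v x) + k x)" if "x \<in> A" for x
    using v_nonneg[OF that] u_lower[OF that] by simp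
  ultimately show v: "set_integrable M A v"
    by (intro set_integrable_bound[OF _ v_meas] AE_I2) auto
  have "set_integrable M A (\<lambda>x. (u x + v x) - v x)"
    using sum v by (rule set_integral_diff)
  then show "set_integrable M A u"
    by simp
qed

lemma set_integral_split_bounded_below:
  fixes D u v k :: "'a \<Rightarrow> real"
  assumes c: "c \<noteq> 0" and D: "set_integrable M A D"
    and split: "\<And>x. x \<in> A \<Longrightarrow> D x = c * u x + c * v x"
    and k: "set_integrable M A k" and v_meas: "set_borel_measurable M A v"
    and v_nonneg: "\<And>x. x \<in> A \<Longrightarrow> 0 \<le> v x"
    and u_lower: "\<And>x. x \<in> A \<Longrightarrow> 0 \<le> u x + k x"
  shows "set_integrable M A u \<and> set_integrable M A v \<and>
    (LINT x:A|M. D x) = c * (LINT x:A|M. u x) + c * (LINT x:A|M. v x)"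
proof -
  have indicator_D: "(\<lambda>x. indicator A x *\<^sub>R D x) = (\<lambda>x. indicator A x *\<^sub>R (c * (u x + v x)))"
    by (auto simp: split indicator_def distrib_left)
  have "set_integrable M A (\<lambda>x. c * (u x + v x))"
    using D unfolding set_integrable_def indicator_D .
  then have "set_integrable M A (\<lambda>x. u x + v x)"
    using c by simp
  note summands = set_integrable_nonneg_summands[OF this k v_meas v_nonneg u_lower]
  have "(LINT x:A|M. D x) = (LINT x:A|M. c * (u x + v x))"
    unfolding set_lebesgue_integral_def indicator_D ..
  then show ?thesis
    using summands by (simp add: set_integral_add(2) distrib_left)
qed

lemma set_borel_measurable_lborel_continuous_on:
  fixes g :: "'a::euclidean_space \<Rightarrow> 'b::real_normed_vector"
  assumes "A \<in> sets borel" "continuous_on A g"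
  shows "set_borel_measurable lborel A g"
  using set_measurable_continuous_on[OF assms] by (simp add: set_borel_measurable_def)

lemma hs_sq_eq_wirtinger:
  "linear (Dg g z) \<Longrightarrow> hs_sq g z = 2 * ((cmod (wz g z))\<^sup>2 + (cmod (wzbar g z))\<^sup>2)"
  unfolding hs_sq_eq_lin_hs_sq wz_eq_lin_dz wzbar_eq_lin_dzbar by (rule lin_hs_sq_eq)

lemma jac_eq_wirtinger:
  "linear (Dg g z) \<Longrightarrow> jac g z = (cmod (wz g z))\<^sup>2 - (cmod (wzbar g z))\<^sup>2"
  unfolding jac_eq_lin_jac wz_eq_lin_dz wzbar_eq_lin_dzbar by (rule lin_jac_eq)

lemma norm_wz_mult_wzbar_le_hs_sq:
  assumes "linear (Dg g z)"
  shows "4 * cmod (wz g z * wzbar g z) \<le> hs_sq g z"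
proof -
  have "0 \<le> 2 * (cmod (wz g z) - cmod (wzbar g z))\<^sup>2"
    by simp
  then show ?thesis
    unfolding hs_sq_eq_wirtinger[OF assms] norm_mult by (simp add: algebra_simps power2_eq_square)
qed

lemma continuous_on_wz:
  assumes "\<And>v. continuous_on S (\<lambda>z. Dg g z v)"
  shows "continuous_on S (wz g)" and "continuous_on S (wzbar g)"
  unfolding wz_def[abs_def] wzbar_def[abs_def] by (auto intro!: continuous_intros assms)

lemma smooth_on_C1:
  assumes "smooth_on S g"
  shows "continuous_on S g" and "g differentiable_on S" and "\<And>v. continuous_on S (\<lambda>z. Dg g z v)"
  using assms[unfolded smooth_on_def, THEN spec, of 0] assms[unfolded smooth_on_def, THEN spec, of 1]
  by auto

lemma has_derivative_Dg:
  assumes "open S" "g differentiable_on S" "z \<in> S"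
  shows "(g has_derivative Dg g z) (at z)"
proof -
  have "g differentiable at z"
    using assms by (metis at_within_open differentiable_on_def)
  then show ?thesis
    unfolding Dg_def[abs_def] by (simp add: frechet_derivative_works[symmetric])
qed

locale diffeo_pair =
  fixes X Y :: "complex set" and h H f :: "complex \<Rightarrow> complex"
  assumes open_X: "open X" and open_Y: "open Y"
    and diffeo_h: "op_diffeo X Y h" and diffeo_H: "op_diffeo X Y H"
    and f_eq: "f = inv_into X H \<circ> h"
begin

lemma bij_h: "bij_betw h X Y" and bij_H: "bij_betw H X Y"
  and smooth_h: "smooth_on X h" and smooth_H: "smooth_on X H"
  and smooth_inv_H: "smooth_on Y (inv_into X H)"
  and jac_h_pos: "z \<in> X \<Longrightarrow> 0 < jac h z" and jac_H_pos: "z \<in> X \<Longrightarrow> 0 < jac H z"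
  using diffeo_h diffeo_H by (auto simp: op_diffeo_def)

lemma h_in_Y: "z \<in> X \<Longrightarrow> h z \<in> Y"
  using bij_h by (auto simp: bij_betw_def)

lemma bij_f: "bij_betw f X X"
  unfolding f_eq by (rule bij_betw_trans[OF bij_h bij_betw_inv_into[OF bij_H]])

lemma f_in_X: "z \<in> X \<Longrightarrow> f z \<in> X"
  using bij_f by (auto simp: bij_betw_def)

lemma H_f: "z \<in> X \<Longrightarrow> H (f z) = h z"
  using bij_H h_in_Y by (auto simp: f_eq bij_betw_def intro: f_inv_into_f)

lemma has_derivative_h: "z \<in> X \<Longrightarrow> (h has_derivative Dg h z) (at z)"
  by (rule has_derivative_Dg[OF open_X smooth_on_C1(2)[OF smooth_h]])

lemma has_derivative_H: "z \<in> X \<Longrightarrow> (H has_derivative Dg H z) (at z)"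
  by (rule has_derivative_Dg[OF open_X smooth_on_C1(2)[OF smooth_H]])

lemma has_derivative_inv_H: "w \<in> Y \<Longrightarrow> (inv_into X H has_derivative Dg (inv_into X H) w) (at w)"
  by (rule has_derivative_Dg[OF open_Y smooth_on_C1(2)[OF smooth_inv_H]])

lemma Dg_f: "z \<in> X \<Longrightarrow> Dg f z = Dg (inv_into X H) (h z) \<circ> Dg h z"
  and has_derivative_f: "z \<in> X \<Longrightarrow> (f has_derivative Dg f z) (at z)"
proof -
  assume z: "z \<in> X"
  have "(f has_derivative Dg (inv_into X H) (h z) \<circ> Dg h z) (at z)"
    unfolding f_eq using has_derivative_h[OF z] has_derivative_inv_H[OF h_in_Y[OF z]]
    by (rule diff_chain_at)
  then show "Dg f z = Dg (inv_into X H) (h z) \<circ> Dg h z" and "(f has_derivative Dg f z) (at z)"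
    by (simp_all add: Dg_def[abs_def] frechet_derivative_at[symmetric])
qed

lemma Dg_h_chain: "z \<in> X \<Longrightarrow> Dg h z = (\<lambda>v. Dg H (f z) (Dg f z v))"
proof -
  assume z: "z \<in> X"
  have "(H \<circ> f has_derivative Dg H (f z) \<circ> Dg f z) (at z)"
    using has_derivative_f[OF z] has_derivative_H[OF f_in_X[OF z]] by (rule diff_chain_at)
  then have "(h has_derivative Dg H (f z) \<circ> Dg f z) (at z)"
    by (rule has_derivative_transform_within_open[OF _ open_X z]) (simp add: H_f)
  then show ?thesis
    using has_derivative_unique[OF has_derivative_h[OF z]] by (simp add: o_def)
qed

lemma linear_Dg_h: "z \<in> X \<Longrightarrow> linear (Dg h z)"
  and linear_Dg_H: "z \<in> X \<Longrightarrow> linear (Dg H z)"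
  and linear_Dg_f: "z \<in> X \<Longrightarrow> linear (Dg f z)"
  by (auto intro: has_derivative_linear has_derivative_h has_derivative_H has_derivative_f)

lemma wirtinger_chain:
  assumes "z \<in> X"
  shows "wz h z = wz H (f z) * wz f z + wzbar H (f z) * cnj (wzbar f z)"
    and "wzbar h z = wz H (f z) * wzbar f z + wzbar H (f z) * cnj (wz f z)"
  unfolding wz_eq_lin_dz wzbar_eq_lin_dzbar Dg_h_chain[OF assms]
    lin_dz_compose[OF linear_Dg_H[OF f_in_X[OF assms]] linear_Dg_f[OF assms]] by simp_all

lemma jac_f_pos: "z \<in> X \<Longrightarrow> 0 < jac f z"
proof -
  assume z: "z \<in> X"
  have "jac h z = jac H (f z) * jac f z"
    unfolding jac_eq_lin_jac Dg_h_chain[OF z]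
    by (rule lin_jac_compose[OF linear_Dg_H[OF f_in_X[OF z]] linear_Dg_f[OF z]])
  then show ?thesis
    using jac_h_pos[OF z] jac_H_pos[OF f_in_X[OF z]] by (simp add: zero_less_mult_iff)
qed

lemma wirtinger_f_pos: "z \<in> X \<Longrightarrow> 0 < (cmod (wz f z))\<^sup>2 - (cmod (wzbar f z))\<^sup>2"
  using jac_f_pos jac_eq_wirtinger[OF linear_Dg_f] by simp

lemma continuous_on_Dg_h: "continuous_on X (\<lambda>z. Dg h z v)"
  and continuous_on_Dg_H: "continuous_on X (\<lambda>z. Dg H z v)"
  using smooth_on_C1 smooth_h smooth_H by blast+

lemma continuous_on_f: "continuous_on X f"
  using has_derivative_f by (blast intro: continuous_at_imp_continuous_on has_derivative_continuous)

lemma continuous_on_Dg_f: "continuous_on X (\<lambda>z. Dg f z v)"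
proof -
  let ?L = "\<lambda>z. Dg (inv_into X H) (h z)"
  have "continuous_on X (\<lambda>z. ?L z w)" for w
    by (rule continuous_on_compose2[OF smooth_on_C1(3)[OF smooth_inv_H] smooth_on_C1(1)[OF smooth_h]])
      (auto simp: h_in_Y)
  then have "continuous_on X (\<lambda>z. lin_dz (?L z) * Dg h z v + lin_dzbar (?L z) * cnj (Dg h z v))"
    unfolding lin_dz_def lin_dzbar_def by (auto intro!: continuous_intros continuous_on_Dg_h)
  then show ?thesis
    by (rule continuous_on_eq) (simp add: Dg_f
        linear_eq_lin_dz_lin_dzbar[OF has_derivative_linear[OF has_derivative_inv_H[OF h_in_Y]]])
qed

lemma continuous_on_Dg_H_f: "continuous_on X (\<lambda>z. Dg H (f z) v)"
  by (rule continuous_on_compose2[OF continuous_on_Dg_H continuous_on_f]) (auto simp: f_in_X)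

lemma continuous_on_comp_h: "continuous_on Y \<Phi> \<Longrightarrow> continuous_on X (\<lambda>z. \<Phi> (h z))"
  by (rule continuous_on_compose2[OF _ smooth_on_C1(1)[OF smooth_h]]) (auto simp: h_in_Y)

lemma energy_pullback:
  assumes \<Phi>: "continuous_on Y \<Phi>" and energy_H: "finite_energy \<Phi> X H"
  shows "set_integrable lborel X (\<lambda>z. jac f z * (\<Phi> (h z) * hs_sq H (f z)))"
    and "energy \<Phi> X H = (LINT z:X|lborel. jac f z * (\<Phi> (h z) * hs_sq H (f z)))"
proof -
  define F where "F w = \<Phi> (H w) * hs_sq H w" for w
  have X: "X \<in> sets borel"
    using open_X by simp
  have f_image: "f ` X = X" and inj_f: "inj_on f X"
    using bij_f by (auto simp: bij_betw_def)
  have pullback: "\<bar>lin_jac (Dg f z)\<bar> * F (f z) = jac f z * (\<Phi> (h z) * hs_sq H (f z))"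
    if "z \<in> X" for z
    using jac_f_pos[OF that] by (simp add: F_def H_f[OF that] jac_eq_lin_jac)
  have "continuous_on X (\<lambda>z. jac f z * (\<Phi> (h z) * hs_sq H (f z)))"
    unfolding jac_def hs_sq_def
    by (intro continuous_intros continuous_on_Dg_f continuous_on_Dg_H_f continuous_on_comp_h \<Phi>)
  then have "continuous_on X (\<lambda>z. \<bar>lin_jac (Dg f z)\<bar> * F (f z))"
    by (rule continuous_on_eq) (simp add: pullback)
  then have meas: "set_borel_measurable lborel X (\<lambda>z. \<bar>lin_jac (Dg f z)\<bar> * F (f z))"
    by (rule set_borel_measurable_lborel_continuous_on[OF X])
  have integrable_F: "set_integrable lborel (f ` X) F"
    using energy_H by (simp add: f_image finite_energy_def F_def[abs_def])
  note change = set_integral_change_of_variables_complex[OF X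
      has_derivative_at_withinI[OF has_derivative_f] inj_f meas integrable_F]
  show "set_integrable lborel X (\<lambda>z. jac f z * (\<Phi> (h z) * hs_sq H (f z)))"
    using change(1) by (rule set_integrable_cong[THEN iffD1, OF refl refl pullback, rotated])
  have "energy \<Phi> X H = (LINT w:f ` X|lborel. F w)"
    by (simp add: energy_def F_def f_image)
  also have "\<dots> = (LINT z:X|lborel. \<bar>lin_jac (Dg f z)\<bar> * F (f z))"
    using change(2) by simp
  also have "\<dots> = (LINT z:X|lborel. jac f z * (\<Phi> (h z) * hs_sq H (f z)))"
    by (rule set_lebesgue_integral_cong) (simp_all add: X pullback)
  finally show "energy \<Phi> X H = (LINT z:X|lborel. jac f z * (\<Phi> (h z) * hs_sq H (f z)))" .
qed

lemma energy_difference: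
  assumes "continuous_on Y \<Phi>" "finite_energy \<Phi> X h" "finite_energy \<Phi> X H"
  shows "set_integrable lborel X (\<lambda>z. jac f z * (\<Phi> (h z) * hs_sq H (f z)) - \<Phi> (h z) * hs_sq h z)"
    and "energy \<Phi> X H - energy \<Phi> X h
      = (LINT z:X|lborel. jac f z * (\<Phi> (h z) * hs_sq H (f z)) - \<Phi> (h z) * hs_sq h z)"
  using set_integral_diff[OF energy_pullback(1)[OF assms(1,3)] assms(2)[unfolded finite_energy_def]]
  by (simp_all add: energy_pullback(2)[OF assms(1,3)] energy_def[of _ _ h])

lemma energy_density_difference:
  assumes z: "z \<in> X"
  shows "jac f z * (\<Phi> (h z) * hs_sq H (f z)) - \<Phi> (h z) * hs_sq h z =
    4 * (((cmod (wz f z - gam h z * wzbar f z))\<^sup>2 / ((cmod (wz f z))\<^sup>2 - (cmod (wzbar f z))\<^sup>2) - 1)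
      * \<Phi> (h z) * cmod (wz h z * wzbar h z))
    + 4 * (\<Phi> (h z) * (cmod (wz h z) - cmod (wzbar h z))\<^sup>2 * (cmod (wzbar f z))\<^sup>2
      / ((cmod (wz f z))\<^sup>2 - (cmod (wzbar f z))\<^sup>2))"
proof -
  note identity = dirichlet_density_identity[OF wirtinger_f_pos[OF z] wirtinger_chain[OF z]]
  have "jac f z * (\<Phi> (h z) * hs_sq H (f z)) - \<Phi> (h z) * hs_sq h z
    = \<Phi> (h z) * (((cmod (wz f z))\<^sup>2 - (cmod (wzbar f z))\<^sup>2)
      * (2 * ((cmod (wz H (f z)))\<^sup>2 + (cmod (wzbar H (f z)))\<^sup>2))
      - 2 * ((cmod (wz h z))\<^sup>2 + (cmod (wzbar h z))\<^sup>2))"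
    by (simp add: jac_eq_wirtinger[OF linear_Dg_f[OF z]] algebra_simps
        hs_sq_eq_wirtinger[OF linear_Dg_h[OF z]] hs_sq_eq_wirtinger[OF linear_Dg_H[OF f_in_X[OF z]]])
  then show ?thesis
    unfolding identity gam_eq_sgn by (simp add: algebra_simps)
qed

lemma first_integrand_lower_bound:
  assumes "\<forall>w\<in>Y. 0 < \<Phi> w" "z \<in> X"
  shows "0 \<le> ((cmod (wz f z - gam h z * wzbar f z))\<^sup>2 / ((cmod (wz f z))\<^sup>2 - (cmod (wzbar f z))\<^sup>2) - 1)
      * \<Phi> (h z) * cmod (wz h z * wzbar h z) + \<Phi> (h z) * cmod (wz h z * wzbar h z)"
  using assms wirtinger_f_pos[OF assms(2)] h_in_Y[OF assms(2)]
  by (simp add: algebra_simps less_imp_le)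

lemma second_integrand_nonneg:
  assumes "\<forall>w\<in>Y. 0 < \<Phi> w" "z \<in> X"
  shows "0 \<le> \<Phi> (h z) * (cmod (wz h z) - cmod (wzbar h z))\<^sup>2 * (cmod (wzbar f z))\<^sup>2
      / ((cmod (wz f z))\<^sup>2 - (cmod (wzbar f z))\<^sup>2)"
  using assms wirtinger_f_pos[OF assms(2)] h_in_Y[OF assms(2)] by (simp add: less_imp_le)

lemma second_integrand_measurable:
  assumes "continuous_on Y \<Phi>"
  shows "set_borel_measurable lborel X (\<lambda>z. \<Phi> (h z) * (cmod (wz h z) - cmod (wzbar h z))\<^sup>2
      * (cmod (wzbar f z))\<^sup>2 / ((cmod (wz f z))\<^sup>2 - (cmod (wzbar f z))\<^sup>2))"
proof -
  have "continuous_on X (\<lambda>z. \<Phi> (h z) * (cmod (wz h z) - cmod (wzbar h z))\<^sup>2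
      * (cmod (wzbar f z))\<^sup>2 / ((cmod (wz f z))\<^sup>2 - (cmod (wzbar f z))\<^sup>2))"
    by (intro continuous_intros continuous_on_comp_h assms continuous_on_wz continuous_on_Dg_h
        continuous_on_Dg_f) (use wirtinger_f_pos in fastforce)
  then show ?thesis
    using open_X by (simp add: set_borel_measurable_lborel_continuous_on)
qed

lemma set_integrable_norm_wz_mult_wzbar:
  assumes "finite_energy \<Phi> X h" "continuous_on Y \<Phi>"
  shows "set_integrable lborel X (\<lambda>z. \<Phi> (h z) * cmod (wz h z * wzbar h z))"
proof (rule set_integrable_bound)
  show "set_integrable lborel X (\<lambda>z. \<Phi> (h z) * hs_sq h z)"
    using assms(1) by (simp add: finite_energy_def)
  have "continuous_on X (\<lambda>z. \<Phi> (h z) * cmod (wz h z * wzbar h z))"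
    by (intro continuous_intros continuous_on_comp_h assms(2) continuous_on_wz continuous_on_Dg_h)
  then show "set_borel_measurable lborel X (\<lambda>z. \<Phi> (h z) * cmod (wz h z * wzbar h z))"
    using open_X by (simp add: set_borel_measurable_lborel_continuous_on)
  have "norm (\<Phi> (h z) * cmod (wz h z * wzbar h z)) \<le> norm (\<Phi> (h z) * hs_sq h z)"
    if "z \<in> X" for z
  proof -
    have "cmod (wz h z * wzbar h z) \<le> hs_sq h z"
      using norm_wz_mult_wzbar_le_hs_sq[OF linear_Dg_h[OF that]] norm_ge_zero[of "wz h z * wzbar h z"]
      by linarith
    then show ?thesis
      by (simp add: abs_mult mult_left_mono)
  qed
  then show "AE z in lborel. z \<in> X \<longrightarrow>
      norm (\<Phi> (h z) * cmod (wz h z * wzbar h z)) \<le> norm (\<Phi> (h z) * hs_sq h z)"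
    by simp
qed

end

theorem lemma2p1:
  fixes X Y :: "complex set" and \<Phi> :: "complex \<Rightarrow> real" and h H :: "complex \<Rightarrow> complex"
  assumes "domain X" "bounded X" "domain Y" "bounded Y"
    and "continuous_on Y \<Phi>" "\<forall>w\<in>Y. \<Phi> w > 0"
    and "op_diffeo X Y h" "op_diffeo X Y H"
    and "finite_energy \<Phi> X h" "finite_energy \<Phi> X H"
  defines "f \<equiv> inv_into X H \<circ> h"
  shows "set_integrable lborel X (\<lambda>z.
           ((cmod (wz f z - gam h z * wzbar f z))\<^sup>2 / ((cmod (wz f z))\<^sup>2 - (cmod (wzbar f z))\<^sup>2) - 1)
             * \<Phi> (h z) * cmod (wz h z * wzbar h z)) \<and>
         set_integrable lborel X (\<lambda>z.
           \<Phi> (h z) * (cmod (wz h z) - cmod (wzbar h z))\<^sup>2 * (cmod (wzbar f z))\<^sup>2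
             / ((cmod (wz f z))\<^sup>2 - (cmod (wzbar f z))\<^sup>2)) \<and>
         energy \<Phi> X H - energy \<Phi> X h =
           4 * (LINT z:X|lborel.
              ((cmod (wz f z - gam h z * wzbar f z))\<^sup>2 / ((cmod (wz f z))\<^sup>2 - (cmod (wzbar f z))\<^sup>2) - 1)
                * \<Phi> (h z) * cmod (wz h z * wzbar h z))
         + 4 * (LINT z:X|lborel.
              \<Phi> (h z) * (cmod (wz h z) - cmod (wzbar h z))\<^sup>2 * (cmod (wzbar f z))\<^sup>2
                / ((cmod (wz f z))\<^sup>2 - (cmod (wzbar f z))\<^sup>2))"
proof -
  interpret diffeo_pair X Y h H f
    using assms(1,3,7,8) f_def by unfold_locales (auto simp: domain_def)
  show ?thesis
    unfolding energy_difference(2)[OF assms(5,9,10)]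
    by (rule set_integral_split_bounded_below[where k = "\<lambda>z. \<Phi> (h z) * cmod (wz h z * wzbar h z)"])
      (simp_all only: numeral_neq_zero not_False_eq_True energy_difference(1)[OF assms(5,9,10)]
        energy_density_difference set_integrable_norm_wz_mult_wzbar[OF assms(9,5)]
        second_integrand_measurable[OF assms(5)] second_integrand_nonneg[OF assms(6)]
        first_integrand_lower_bound[OF assms(6)])
qed

end
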